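(* Let $\mu_2>\mu_1>-\frac12$. For $\mu\in\{\mu_1,\mu_2\}$ define the normalized generalized Hermite polynomials $\widehat H^{\mu}_n(x)=\frac{\gamma_\mu(n)}{n!\,\lfloor n/2\rfloor!}H^\mu_n(x)$. Then for every $n\ge0$, $$\widehat H^{\mu_2}_n(x)=\sum_{k=0}^{\lfloor n/2\rfloor}\frac{(-1)^k4^k}{k!}(\mu_2-\mu_1)_k\,\widehat H^{\mu_1}_{n-2k}(x).$$ Equivalently, $H^{\mu_2}_n(x)=\sum_{k=0}^{\lfloor n/2\rfloor}C_{n-2k}(n)H^{\mu_1}_{n-2k}(x)$ with $$C_{n-2k}(n)=\frac{(-1)^k}{k!}\frac{n!}{(n-2k)!}\frac{4^k\lfloor n/2\rfloor!}{(\lfloor n/2\rfloor-k)!}\frac{\gamma_{\mu_1}(n-2k)}{\gamma_{\mu_2}(n)}(\mu_2-\mu_1)_k .$$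
   Context: For $\mu\notin\{-\frac12,-\frac32,\dots\}$ and $n=2p+\epsilon$ ($\epsilon\in\{0,1\}$), $\gamma_\mu(n)=2^{2p+\epsilon}p!\,(\mu+\frac12)_{p+\epsilon}$, with $(\alpha)_n=\Gamma(\alpha+n)/\Gamma(\alpha)$; $\exp_\mu(x)=\sum_{n\ge0}x^n/\gamma_\mu(n)$. The generalized Hermite (Szegő–Chihara) polynomials $H^\mu_n$ are defined by $e^{-t^2}\exp_\mu(2xt)=\sum_{n\ge0}H^\mu_n(x)t^n/n!$. *)

theory Defs
  imports "HOL-Analysis.Analysis"
begin

definition gamma_mu :: "real \<Rightarrow> nat \<Rightarrow> real" where
  "gamma_mu mu n = 2 ^ n * fact (n div 2) * pochhammer (mu + 1/2) (n div 2 + n mod 2)"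

definition exp_mu :: "real \<Rightarrow> real \<Rightarrow> real" where
  "exp_mu mu x = (\<Sum>n. x ^ n / gamma_mu mu n)"

definition gen_hermite :: "real \<Rightarrow> nat \<Rightarrow> real \<Rightarrow> real" where
  "gen_hermite mu n x =
     (THE h. \<forall>t::real. (\<lambda>m. h m * t ^ m / fact m) sums (exp (- t\<^sup>2) * exp_mu mu (2 * x * t))) n"

definition gen_hermite_hat :: "real \<Rightarrow> nat \<Rightarrow> real \<Rightarrow> real" where
  "gen_hermite_hat mu n x = gamma_mu mu n / (fact n * fact (n div 2)) * gen_hermite mu n x"

end

theory Submission
  imports Defs
begin

text \<open>Multiplying out the generating function as a Cauchy product gives the explicit sum
  H_n(x) = n! \<Sum>_k (-1)^k (2x)^(n-2k) / (k! \<gamma>_\<mu>(n-2k)).  Writing n = 2p + e with e \<in> {0,1},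
  the normalized polynomial is (2x)^e (-4)^p L_p^(\<mu>-1/2+e)(x^2) with L the Laguerre polynomials,
  so the theorem is the classical connection formula
  L_p^(\<alpha>+d) = \<Sum>_j (d)_j / j! L_(p-j)^(\<alpha>); coefficientwise this is the Chu-Vandermonde
  identity for rising factorials.\<close>

lemma gamma_mu_Suc:
  "gamma_mu mu (Suc n) = gamma_mu mu n * (if even n then real n + 2*mu + 1 else real n + 1)"
proof (cases "even n")
  case True
  then obtain p where n: "n = 2*p" by blast
  have "Suc n div 2 = p" "Suc n mod 2 = 1" "n div 2 = p" "n mod 2 = 0" using n by auto
  then show ?thesis using n unfolding gamma_mu_def
    by (simp add: pochhammer_rec' algebra_simps)
next
  case False
  then obtain p where n: "n = 2*p+1" using oddE by blast
  have "Suc n div 2 = Suc p" "Suc n mod 2 = 0" "n div 2 = p" "n mod 2 = 1" using n by auto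
  then show ?thesis using n unfolding gamma_mu_def
    by (simp add: algebra_simps)
qed

lemma gamma_mu_lower_bound:
  assumes "mu > -1/2"
  shows "(min 1 (2*mu+1)) ^ n * fact n \<le> gamma_mu mu n"
proof (induction n)
  case 0
  then show ?case by (simp add: gamma_mu_def)
next
  case (Suc n)
  define c where "c = min 1 (2*mu+1)"
  have c: "0 < c" "c \<le> 1" "c \<le> 2*mu+1" using assms by (auto simp: c_def)
  have factor: "c * (real n + 1) \<le> (if even n then real n + 2*mu + 1 else real n + 1)"
    using c mult_right_mono[OF c(2), of "real n"] by (auto simp: algebra_simps)
  have IH: "c^n * fact n \<le> gamma_mu mu n" using Suc by (simp add: c_def)
  have "0 \<le> c^n * fact n" using c by simp
  then have "0 \<le> gamma_mu mu n" using IH by linarith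
  have "c ^ Suc n * fact (Suc n) = (c^n * fact n) * (c * (real n + 1))"
    by (simp add: algebra_simps)
  also have "\<dots> \<le> gamma_mu mu n * (if even n then real n + 2*mu + 1 else real n + 1)"
    using IH \<open>0 \<le> c^n * fact n\<close> \<open>0 \<le> gamma_mu mu n\<close> c factor by (intro mult_mono) auto
  finally show ?case by (simp add: gamma_mu_Suc c_def)
qed

lemma gamma_mu_pos: "mu > -1/2 \<Longrightarrow> gamma_mu mu n > 0"
  by (rule less_le_trans[OF _ gamma_mu_lower_bound]) auto

lemma summable_norm_exp_mu_series:
  assumes "mu > -1/2"
  shows "summable (\<lambda>n. norm (z ^ n / gamma_mu mu n))"
proof (rule summable_comparison_test)
  define c where "c = min 1 (2*mu+1)"
  have c: "0 < c" using assms by (auto simp: c_def)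
  show "summable (\<lambda>n. inverse (fact n) * (norm z / c) ^ n)" by (rule summable_exp)
  have "norm (norm (z ^ n / gamma_mu mu n)) \<le> inverse (fact n) * (norm z / c) ^ n" for n
  proof -
    have "norm (norm (z ^ n / gamma_mu mu n)) = norm z ^ n / gamma_mu mu n"
      using gamma_mu_pos[OF assms, of n] by (simp add: norm_power power_abs)
    also have "\<dots> \<le> norm z ^ n / (c^n * fact n)"
      using gamma_mu_lower_bound[OF assms, of n] gamma_mu_pos[OF assms, of n] c
      by (intro divide_left_mono) (auto simp: c_def)
    also have "\<dots> = inverse (fact n) * (norm z / c) ^ n"
      by (simp add: power_divide field_simps)
    finally show ?thesis .
  qed
  then show "\<exists>N. \<forall>n\<ge>N. norm (norm (z ^ n / gamma_mu mu n)) \<le> inverse (fact n) * (norm z / c) ^ n"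
    by blast
qed

lemma gamma_mu_eq_gamma_mu_diff:
  assumes "k \<le> n div 2"
  shows "gamma_mu mu n = gamma_mu mu (n - 2*k) * 4^k * (fact (n div 2) / fact (n div 2 - k))
           * pochhammer (mu + 1/2 + real (n mod 2) + real (n div 2 - k)) k"
proof -
  define p where "p = n div 2"
  define e where "e = n mod 2"
  have n: "n = 2*p + e" by (simp add: p_def e_def)
  have kp: "k \<le> p" using assms by (simp add: p_def)
  have nk: "n - 2*k = 2*(p-k) + e" using kp n by simp
  have nk_div_mod: "(n - 2*k) div 2 = p - k" "(n - 2*k) mod 2 = e"
    unfolding nk by (auto simp: e_def)
  have "pochhammer (mu+1/2) (p+e)
      = pochhammer (mu+1/2) (p-k+e) * pochhammer (mu + 1/2 + real (p-k+e)) k"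
    using pochhammer_product[of "p-k+e" "p+e" "mu+1/2"] kp by simp
  moreover have "(2::real)^n = 2^(n-2*k) * 4^k"
  proof -
    have "(2::real)^n = 2^(n-2*k) * 2^(2*k)" using kp n by (simp flip: power_add)
    then show ?thesis by (simp add: power_mult)
  qed
  moreover have "fact p = fact (p-k) * (fact p / fact (p-k) :: real)" by simp
  ultimately show ?thesis
    unfolding gamma_mu_def nk_div_mod p_def [symmetric] e_def [symmetric]
    by (simp add: algebra_simps)
qed

lemma powser_sums_zero_imp_coeff_zero:
  fixes a :: "nat \<Rightarrow> 'a::{real_normed_field,banach}"
  assumes "\<And>t. (\<lambda>n. a n * t^n) sums 0"
  shows "a m = 0"
proof (induction m rule: less_induct)
  case (less m)
  have "(\<lambda>i. a (i+m) * t^i) sums 0" if "t \<noteq> 0" for t :: 'a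
  proof -
    have "(\<lambda>i. a (i+m) * t^(i+m)) sums 0"
      using sums_zero_iff_shift[of m "\<lambda>n. a n * t^n" 0] assms less.IH by simp
    then have "(\<lambda>i. inverse (t^m) * (a (i+m) * t^(i+m))) sums (inverse (t^m) * 0)"
      by (rule sums_mult)
    moreover have "inverse (t^m) * (a (i+m) * t^(i+m)) = a (i+m) * t^i" for i
      using that by (simp add: power_add)
    ultimately show ?thesis by simp
  qed
  then have "((\<lambda>t::'a. 0) \<longlongrightarrow> a (0+m)) (at 0)"
    by (intro powser_limit_0_strong[where s=1]) auto
  then show ?case
    using LIM_const_eq by fastforce
qed

lemma powser_coeffs_unique:
  fixes a b :: "nat \<Rightarrow> 'a::{real_normed_field,banach}"
  assumes "\<And>t. (\<lambda>n. a n * t^n) sums f t" and "\<And>t. (\<lambda>n. b n * t^n) sums f t"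
  shows "a = b"
proof
  fix m
  have "(\<lambda>n. (a n - b n) * t^n) sums 0" for t
    using sums_diff[OF assms[of t]] by (simp add: left_diff_distrib)
  then show "a m = b m"
    using powser_sums_zero_imp_coeff_zero[of "\<lambda>n. a n - b n"] by simp
qed

lemma sum_atMost_if_even:
  fixes f :: "nat \<Rightarrow> 'a::comm_monoid_add"
  shows "(\<Sum>i\<le>n. if even i then f i else 0) = (\<Sum>k\<le>n div 2. f (2*k))"
proof -
  have "(\<Sum>i\<le>n. if even i then f i else 0) = sum f {i\<in>{..n}. even i}"
    by (subst sum.inter_filter) auto
  also have "{i\<in>{..n}. even i} = (\<lambda>k. 2*k) ` {..n div 2}"
    by (auto elim!: evenE)
  also have "sum f \<dots> = (\<Sum>k\<le>n div 2. f (2*k))"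
    by (subst sum.reindex) (auto simp: inj_on_def)
  finally show ?thesis .
qed

lemma sums_even_interleave:
  fixes f :: "nat \<Rightarrow> real"
  assumes "f sums s"
  shows "(\<lambda>i. if even i then f (i div 2) else 0) sums s"
  using sums_if[OF sums_zero assms] by simp

lemma gen_hermite_series_sums:
  assumes "mu > -1/2"
  shows "(\<lambda>n. (\<Sum>k\<le>n div 2. (-1)^k / fact k * ((2*x)^(n-2*k) / gamma_mu mu (n-2*k))) * t^n)
           sums (exp (- t\<^sup>2) * exp_mu mu (2 * x * t))"
proof -
  define A where "A i = (if even i then (- t\<^sup>2)^(i div 2) /\<^sub>R fact (i div 2) else 0)" for i
  define B where "B j = (2*x*t)^j / gamma_mu mu j" for j
  have A_sums: "A sums exp (- t\<^sup>2)"
    unfolding A_def by (rule sums_even_interleave[OF exp_converges])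
  have "(\<lambda>i. norm (A i)) sums exp (t\<^sup>2)"
    unfolding A_def using sums_even_interleave[OF exp_converges[of "t\<^sup>2"]]
    by (simp add: abs_mult power_abs if_distrib cong: if_cong)
  then have "summable (\<lambda>i. norm (A i))" by (rule sums_summable)
  moreover have "summable (\<lambda>j. norm (B j))"
    unfolding B_def by (rule summable_norm_exp_mu_series[OF assms])
  ultimately have "(\<lambda>n. \<Sum>i\<le>n. A i * B (n - i)) sums ((\<Sum>i. A i) * (\<Sum>j. B j))"
    by (rule Cauchy_product_sums)
  moreover have "(\<Sum>i. A i) = exp (- t\<^sup>2)" using A_sums by (rule sums_unique [symmetric])
  moreover have "(\<Sum>j. B j) = exp_mu mu (2 * x * t)" by (simp add: B_def exp_mu_def)
  moreover have "(\<Sum>i\<le>n. A i * B (n - i))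
      = (\<Sum>k\<le>n div 2. (-1)^k / fact k * ((2*x)^(n-2*k) / gamma_mu mu (n-2*k))) * t^n" for n
  proof -
    have coeff: "A (2*k) * B (n - 2*k) = (-1)^k / fact k * ((2*x)^(n-2*k) / gamma_mu mu (n-2*k)) * t^n"
      if "k \<le> n div 2" for k
    proof -
      have "t^n = (t\<^sup>2)^k * t^(n-2*k)"
        using that by (simp add: power_mult [symmetric] flip: power_add)
      moreover have "A (2*k) = (-1)^k / fact k * (t\<^sup>2)^k"
        by (simp add: A_def power_minus[of "t\<^sup>2"] divide_inverse)
      ultimately show ?thesis
        by (simp add: B_def power_mult_distrib)
    qed
    have "(\<Sum>i\<le>n. A i * B (n - i)) = (\<Sum>i\<le>n. if even i then A i * B (n - i) else 0)"
      by (intro sum.cong) (auto simp: A_def)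
    also have "\<dots> = (\<Sum>k\<le>n div 2. A (2*k) * B (n - 2*k))"
      by (rule sum_atMost_if_even)
    also have "\<dots> = (\<Sum>k\<le>n div 2. (-1)^k / fact k * ((2*x)^(n-2*k) / gamma_mu mu (n-2*k))) * t^n"
      unfolding sum_distrib_right by (intro sum.cong) (auto simp: coeff)
    finally show ?thesis .
  qed
  ultimately show ?thesis by simp
qed

lemma gen_hermite_explicit:
  assumes "mu > -1/2"
  shows "gen_hermite mu n x
           = fact n * (\<Sum>k\<le>n div 2. (-1)^k / fact k * ((2*x)^(n-2*k) / gamma_mu mu (n-2*k)))"
proof -
  define S where "S n = (\<Sum>k\<le>n div 2. (-1)^k / fact k * ((2*x)^(n-2*k) / gamma_mu mu (n-2*k)))" for n
  let ?P = "\<lambda>h. \<forall>t::real. (\<lambda>m. h m * t ^ m / fact m) sums (exp (- t\<^sup>2) * exp_mu mu (2 * x * t))"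
  have "(THE h. ?P h) = (\<lambda>n. fact n * S n)"
  proof (rule the_equality)
    show "?P (\<lambda>n. fact n * S n)"
      using gen_hermite_series_sums[OF assms] by (simp add: S_def)
  next
    fix h assume "?P h"
    then have "(\<lambda>n. h n / fact n) = S"
      using gen_hermite_series_sums[OF assms]
      by (intro powser_coeffs_unique[where f="\<lambda>t. exp (- t\<^sup>2) * exp_mu mu (2 * x * t)"])
         (simp_all add: S_def)
    then show "h = (\<lambda>n. fact n * S n)"
      by (auto simp: fun_eq_iff field_simps dest: fun_cong)
  qed
  then show ?thesis unfolding gen_hermite_def S_def by simp
qed

text \<open>laguerre_scaled c p z = (-4)^p L_p^(c-1)(z/4), with L_p^(\<alpha>) the Laguerre polynomial.\<close>
definition laguerre_scaled :: "real \<Rightarrow> nat \<Rightarrow> real \<Rightarrow> real" where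
  "laguerre_scaled c p z =
     (\<Sum>m\<le>p. (-4)^(p-m) / (fact (p-m) * fact m) * pochhammer (c + real m) (p-m) * z^m)"

lemma gen_hermite_hat_eq_laguerre_scaled:
  assumes mu: "mu > -1/2"
  shows "gen_hermite_hat mu n x
           = (2*x)^(n mod 2) * laguerre_scaled (mu + 1/2 + real (n mod 2)) (n div 2) ((2*x)^2)"
proof -
  define p where "p = n div 2"
  define e where "e = n mod 2"
  define y where "y = 2*x"
  define c where "c = mu + 1/2 + real e"
  have n: "n = 2*p + e" by (simp add: p_def e_def)
  have "gen_hermite_hat mu n x
      = (\<Sum>k\<le>p. gamma_mu mu n / fact p * ((-1)^k / fact k * (y^(n-2*k) / gamma_mu mu (n-2*k))))"
    unfolding gen_hermite_hat_def gen_hermite_explicit[OF mu] sum_distrib_left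
    by (intro sum.cong) (auto simp: p_def y_def)
  also have "\<dots> = (\<Sum>k\<le>p. y^e * ((-4)^k / (fact k * fact (p-k)) * pochhammer (c + real (p-k)) k * (y^2)^(p-k)))"
  proof (rule sum.cong[OF refl])
    fix k assume "k \<in> {..p}"
    then have kp: "k \<le> p" by simp
    have gamma: "gamma_mu mu n = gamma_mu mu (n-2*k) * 4^k * (fact p / fact (p - k)) * pochhammer (c + real (p-k)) k"
      using gamma_mu_eq_gamma_mu_diff[of k n mu] kp by (simp add: p_def e_def c_def add.assoc)
    have "n - 2*k = e + 2*(p-k)" using kp n by simp
    then have "y^(n-2*k) = y^e * (y^2)^(p-k)"
      by (simp add: power_add power_mult)
    moreover have "(-4::real)^k = (-1)^k * 4^k" by (simp flip: power_mult_distrib)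
    ultimately show "gamma_mu mu n / fact p * ((-1)^k / fact k * (y^(n-2*k) / gamma_mu mu (n-2*k)))
        = y^e * ((-4)^k / (fact k * fact (p-k)) * pochhammer (c + real (p-k)) k * (y^2)^(p-k))"
      unfolding gamma using gamma_mu_pos[OF mu, of "n-2*k"] by (simp add: field_simps)
  qed
  also have "\<dots> = y^e * laguerre_scaled c p (y^2)"
    unfolding laguerre_scaled_def sum_distrib_left atLeast0AtMost [symmetric]
    by (subst sum.atLeastAtMost_rev) (intro sum.cong, auto simp: mult.commute)
  finally show ?thesis by (simp add: p_def e_def y_def c_def)
qed

lemma laguerre_scaled_connection:
  "laguerre_scaled (c + d) p z
     = (\<Sum>j\<le>p. (-4)^j / fact j * pochhammer d j * laguerre_scaled c (p - j) z)"
proof -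
  define F where "F j m = (-4)^j / fact j * pochhammer d j *
      ((-4)^(p-j-m) / (fact (p-j-m) * fact m) * pochhammer (c + real m) (p-j-m) * z^m)" for j m
  have triangle: "{i. i \<in> {..p} \<and> j + i \<le> p} = {..p - j}" if "j \<le> p" for j
    using that by auto
  have "(\<Sum>j\<le>p. (-4)^j / fact j * pochhammer d j * laguerre_scaled c (p-j) z)
      = (\<Sum>j\<le>p. \<Sum>m\<in>{m. m \<in> {..p} \<and> j + m \<le> p}. F j m)"
    unfolding laguerre_scaled_def F_def sum_distrib_left by (intro sum.cong) (auto simp: triangle)
  also have "\<dots> = (\<Sum>m\<le>p. \<Sum>j\<in>{j. j \<in> {..p} \<and> j + m \<le> p}. F j m)"
    by (rule sum.swap_restrict) auto
  also have "\<dots> = (\<Sum>m\<le>p. (-4)^(p-m) / (fact (p-m) * fact m) * pochhammer (c + d + real m) (p-m) * z^m)"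
  proof (rule sum.cong[OF refl])
    fix m assume "m \<in> {..p}"
    define N where "N = p - m"
    have "(\<Sum>j\<le>N. F j m) = (\<Sum>j\<le>N. ((-4)^N * z^m / (fact N * fact m)) *
            (of_nat (N choose j) * pochhammer d j * pochhammer (c + real m) (N - j)))"
    proof (rule sum.cong[OF refl])
      fix j assume "j \<in> {..N}"
      then have jN: "j \<le> N" by simp
      have "p - j - m = N - j" by (simp add: N_def)
      moreover have "(-4::real)^N = (-4)^j * (-4)^(N-j)" using jN by (simp flip: power_add)
      ultimately show "F j m = ((-4)^N * z^m / (fact N * fact m)) *
            (of_nat (N choose j) * pochhammer d j * pochhammer (c + real m) (N - j))"
        unfolding F_def binomial_fact[OF jN] by (simp add: field_simps)
    qed
    also have "\<dots> = ((-4)^N * z^m / (fact N * fact m)) * pochhammer (d + (c + real m)) N"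
      by (simp add: pochhammer_binomial_sum sum_distrib_left)
    finally show "(\<Sum>j\<in>{j. j \<in> {..p} \<and> j + m \<le> p}. F j m)
        = (-4)^(p-m) / (fact (p-m) * fact m) * pochhammer (c + d + real m) (p-m) * z^m"
      using \<open>m \<in> {..p}\<close> triangle[of m] by (simp add: N_def add.commute algebra_simps)
  qed
  also have "\<dots> = laguerre_scaled (c + d) p z" by (simp add: laguerre_scaled_def)
  finally show ?thesis ..
qed

lemma gen_hermite_hat_connection:
  assumes mu1: "mu1 > -1/2" and mu2: "mu2 > -1/2"
  shows "gen_hermite_hat mu2 n x =
           (\<Sum>k = 0..n div 2. (-1) ^ k * 4 ^ k / fact k * pochhammer (mu2 - mu1) k
                              * gen_hermite_hat mu1 (n - 2 * k) x)"
proof -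
  define p where "p = n div 2"
  define e where "e = n mod 2"
  define c where "c = mu1 + 1/2 + real e"
  have n: "n = 2*p + e" by (simp add: p_def e_def)
  have c_shift: "c + (mu2 - mu1) = mu2 + 1/2 + real e" by (simp add: c_def)
  have "gen_hermite_hat mu2 n x = (2*x)^e * laguerre_scaled (c + (mu2 - mu1)) p ((2*x)^2)"
    unfolding c_shift p_def e_def by (rule gen_hermite_hat_eq_laguerre_scaled[OF mu2])
  also have "\<dots> = (\<Sum>k\<le>p. (-4)^k / fact k * pochhammer (mu2 - mu1) k
                           * ((2*x)^e * laguerre_scaled c (p - k) ((2*x)^2)))"
    unfolding laguerre_scaled_connection sum_distrib_left by (simp add: mult_ac)
  also have "\<dots> = (\<Sum>k\<le>p. (-1) ^ k * 4 ^ k / fact k * pochhammer (mu2 - mu1) k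
                           * gen_hermite_hat mu1 (n - 2 * k) x)"
  proof (rule sum.cong[OF refl])
    fix k assume "k \<in> {..p}"
    then have "n - 2*k = 2*(p-k) + e" using n by simp
    then have "(n - 2*k) div 2 = p - k" "(n - 2*k) mod 2 = e" by (auto simp: e_def)
    then have "gen_hermite_hat mu1 (n - 2*k) x = (2*x)^e * laguerre_scaled c (p - k) ((2*x)^2)"
      using gen_hermite_hat_eq_laguerre_scaled[OF mu1, of "n - 2*k" x] by (simp add: c_def)
    moreover have "(-4::real)^k = (-1)^k * 4^k" by (simp flip: power_mult_distrib)
    ultimately show "(-4)^k / fact k * pochhammer (mu2 - mu1) k * ((2*x)^e * laguerre_scaled c (p - k) ((2*x)^2))
        = (-1) ^ k * 4 ^ k / fact k * pochhammer (mu2 - mu1) k * gen_hermite_hat mu1 (n - 2 * k) x"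
      by simp
  qed
  finally show ?thesis by (simp add: p_def atLeast0AtMost)
qed

lemma gen_hermite_connection:
  assumes mu1: "mu1 > -1/2" and mu2: "mu2 > -1/2"
  shows "gen_hermite mu2 n x =
           (\<Sum>k = 0..n div 2.
              ((-1) ^ k / fact k * (fact n / fact (n - 2 * k))
               * (4 ^ k * fact (n div 2) / fact (n div 2 - k))
               * (gamma_mu mu1 (n - 2 * k) / gamma_mu mu2 n)
               * pochhammer (mu2 - mu1) k) * gen_hermite mu1 (n - 2 * k) x)"
proof -
  have "gen_hermite mu2 n x = fact n * fact (n div 2) / gamma_mu mu2 n * gen_hermite_hat mu2 n x"
    using gamma_mu_pos[OF mu2, of n] by (simp add: gen_hermite_hat_def)
  also have "\<dots> = (\<Sum>k = 0..n div 2.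
              ((-1) ^ k / fact k * (fact n / fact (n - 2 * k))
               * (4 ^ k * fact (n div 2) / fact (n div 2 - k))
               * (gamma_mu mu1 (n - 2 * k) / gamma_mu mu2 n)
               * pochhammer (mu2 - mu1) k) * gen_hermite mu1 (n - 2 * k) x)"
    unfolding gen_hermite_hat_connection[OF mu1 mu2] sum_distrib_left
  proof (rule sum.cong[OF refl])
    fix k assume "k \<in> {0..n div 2}"
    then have "(n - 2*k) div 2 = n div 2 - k" by auto
    then show "fact n * fact (n div 2) / gamma_mu mu2 n *
        ((-1) ^ k * 4 ^ k / fact k * pochhammer (mu2 - mu1) k * gen_hermite_hat mu1 (n - 2 * k) x)
      = (-1) ^ k / fact k * (fact n / fact (n - 2 * k)) * (4 ^ k * fact (n div 2) / fact (n div 2 - k))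
        * (gamma_mu mu1 (n - 2 * k) / gamma_mu mu2 n) * pochhammer (mu2 - mu1) k
        * gen_hermite mu1 (n - 2 * k) x"
      unfolding gen_hermite_hat_def
      using gamma_mu_pos[OF mu1, of "n - 2*k"] gamma_mu_pos[OF mu2, of n] by (simp add: field_simps)
  qed
  finally show ?thesis .
qed

theorem mainTheorem14:
  fixes mu1 mu2 x :: real and n :: nat
  assumes "mu1 > - 1/2" and "mu2 > mu1"
  shows "gen_hermite_hat mu2 n x =
           (\<Sum>k = 0..n div 2. (-1) ^ k * 4 ^ k / fact k * pochhammer (mu2 - mu1) k
                              * gen_hermite_hat mu1 (n - 2 * k) x)
       \<and> gen_hermite mu2 n x =
           (\<Sum>k = 0..n div 2.
              ((-1) ^ k / fact k * (fact n / fact (n - 2 * k))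
               * (4 ^ k * fact (n div 2) / fact (n div 2 - k))
               * (gamma_mu mu1 (n - 2 * k) / gamma_mu mu2 n)
               * pochhammer (mu2 - mu1) k) * gen_hermite mu1 (n - 2 * k) x)"
proof -
  have "mu2 > -1/2" using assms by linarith
  then show ?thesis
    using gen_hermite_hat_connection gen_hermite_connection assms(1) by blast
qed

end
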